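(* For each $n\ge1$ let $k_n\in\mathbb{N}$, let $X_{n,1},\dots,X_{n,k_n}$ be independent centred random variables with $\mathbb{V}(X_{n,i})=1$, and let $a_{n,i}\ge 0$ be reals with $\sum_{i=1}^{k_n}a_{n,i}^2=1$. Set $X_n=\sum_{i=1}^{k_n}a_{n,i}X_{n,i}$. Suppose that for each fixed $i$, $X_{n,i}\to N(0,1)$ in distribution as $n\to\infty$ (along those $n$ with $k_n\ge i$), and that $$\lim_{k\to\infty}\sup_n\sum_{i=k}^{k_n}a_{n,i}^2=0$$ (empty sums being $0$). Then $X_n\to N(0,1)$ in distribution. *)

theory Defs
  imports "HOL-Probability.Probability"
begin

text \<open>Weak convergence (convergence in distribution) of a sequence of real distributions
  along the subsequence of indices in S, i.e. convergence of the cdfs at every continuity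
  point of the limit cdf, with n tending to infinity inside S.
  (If S is finite the filter is trivial and the condition is vacuous.)\<close>
definition weak_conv_m_within :: "(nat \<Rightarrow> real measure) \<Rightarrow> real measure \<Rightarrow> nat set \<Rightarrow> bool" where
  "weak_conv_m_within \<mu> N S \<equiv>
     \<forall>x. isCont (cdf N) x \<longrightarrow> ((\<lambda>n. cdf (\<mu> n) x) \<longlongrightarrow> cdf N x) (sequentially \<sqinter> principal S)"

end

theory Submission
  imports Defs
begin

text \<open>
  By Levy's continuity theorem it suffices that the characteristic function of \<open>X\<^sub>n\<close>, which
  by independence is the product of the \<open>\<phi>\<^sub>n\<^sub>i(a\<^sub>n\<^sub>i t)\<close>, tends to \<open>exp(-t\<^sup>2/2)\<close>; since
  \<open>\<Sum>\<^sub>i a\<^sub>n\<^sub>i\<^sup>2 = 1\<close>, the latter is the product of the \<open>exp(-(a\<^sub>n\<^sub>i t)\<^sup>2/2)\<close>. All factors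
  lie in the unit disc, so the two products differ by at most the sum of the
  \<open>|\<phi>\<^sub>n\<^sub>i(a\<^sub>n\<^sub>i t) - exp(-(a\<^sub>n\<^sub>i t)\<^sup>2/2)|\<close>. A second-order Taylor bound makes the
  \<open>i\<close>-th term at most \<open>2 t\<^sup>2 a\<^sub>n\<^sub>i\<^sup>2\<close>, so by the tail condition the terms with \<open>i \<ge> j\<close>
  are small uniformly in \<open>n\<close>. Each of the finitely many remaining terms tends to zero:
  unit variance makes every \<open>\<phi>\<^sub>n\<^sub>i\<close> 1-Lipschitz, which upgrades the pointwise
  convergence \<open>\<phi>\<^sub>n\<^sub>i \<rightarrow> exp(-s\<^sup>2/2)\<close> to uniform convergence on \<open>[-|t|, |t|]\<close>.
\<close>

lemma sequentially_inf_principal_finite: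
  assumes "finite (S :: nat set)"
  shows "sequentially \<sqinter> principal S = bot"
proof -
  have "eventually (\<lambda>n. n \<notin> S) sequentially"
    using assms by (simp add: cofinite_eq_sequentially[symmetric] eventually_cofinite)
  then have "eventually (\<lambda>_. False) (sequentially \<sqinter> principal S)"
    by (simp add: eventually_inf_principal)
  then show ?thesis by (simp add: eventually_False)
qed

lemma sequentially_inf_principal_infinite:
  assumes "infinite (S :: nat set)"
  shows "sequentially \<sqinter> principal S = filtermap (enumerate S) sequentially"
proof (rule filter_eq_iff[THEN iffD2], intro allI iffI)
  fix P
  assume "eventually P (sequentially \<sqinter> principal S)"
  then obtain N where N: "\<And>n. n \<ge> N \<Longrightarrow> n \<in> S \<Longrightarrow> P n"
    by (auto simp: eventually_inf_principal eventually_sequentially)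
  have "P (enumerate S m)" if "m \<ge> N" for m
    using N[of "enumerate S m"] le_enumerate[OF assms, of m] that enumerate_in_set[OF assms]
    by simp
  then show "eventually P (filtermap (enumerate S) sequentially)"
    by (auto simp: eventually_filtermap eventually_sequentially)
next
  fix P
  assume "eventually P (filtermap (enumerate S) sequentially)"
  then obtain M where M: "\<And>m. m \<ge> M \<Longrightarrow> P (enumerate S m)"
    by (auto simp: eventually_filtermap eventually_sequentially)
  have "P n" if "n \<ge> enumerate S M" and "n \<in> S" for n
  proof -
    obtain m where m: "enumerate S m = n"
      using enumerate_Ex[OF assms \<open>n \<in> S\<close>] by blast
    then have "m \<ge> M"
      using \<open>n \<ge> enumerate S M\<close> assms by (metis enumerate_mono_le_iff)
    then show ?thesis using M m by blast
  qed
  then show "eventually P (sequentially \<sqinter> principal S)"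
    by (auto simp: eventually_inf_principal eventually_sequentially)
qed

lemma uniform_limit_equi_lipschitz:
  fixes f :: "'i \<Rightarrow> 'a::metric_space \<Rightarrow> 'b::metric_space"
  assumes "compact S"
    and lim: "\<And>s. s \<in> S \<Longrightarrow> ((\<lambda>n. f n s) \<longlongrightarrow> g s) F"
    and lip_f: "\<forall>\<^sub>F n in F. L-lipschitz_on S (f n)"
    and lip_g: "L-lipschitz_on S g"
  shows "uniform_limit S f g F"
  unfolding uniform_limit_iff
proof (intro allI impI)
  fix e :: real
  assume "e > 0"
  have "L \<ge> 0" using lip_g by (rule lipschitz_on_nonneg)
  define d where "d = e / (3 * (L + 1))"
  have "d > 0" and Ld: "L * d < e / 3"
    using \<open>e > 0\<close> \<open>L \<ge> 0\<close> by (auto simp: d_def field_simps)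
  obtain G where "G \<subseteq> S" "finite G" and cover: "S \<subseteq> (\<Union>p\<in>G. ball p d)"
    using compactE_image[OF \<open>compact S\<close>, of S "\<lambda>p. ball p d"] \<open>d > 0\<close> by force
  have "\<forall>\<^sub>F n in F. \<forall>p\<in>G. dist (f n p) (g p) < e / 3"
  proof (rule eventually_ball_finite[OF \<open>finite G\<close>], rule ballI)
    fix p assume "p \<in> G"
    then have "((\<lambda>n. f n p) \<longlongrightarrow> g p) F" using \<open>G \<subseteq> S\<close> lim by auto
    then show "\<forall>\<^sub>F n in F. dist (f n p) (g p) < e / 3"
      by (rule tendstoD) (use \<open>e > 0\<close> in simp)
  qed
  then show "\<forall>\<^sub>F n in F. \<forall>s\<in>S. dist (f n s) (g s) < e"
    using lip_f
  proof eventually_elim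
    case (elim n)
    show ?case
    proof
      fix s assume "s \<in> S"
      then obtain p where "p \<in> G" "dist p s < d"
        using cover by auto
      with \<open>G \<subseteq> S\<close> have "p \<in> S" by auto
      have "dist (f n s) (f n p) \<le> L * d"
        using lipschitz_onD[OF elim(2) \<open>s \<in> S\<close> \<open>p \<in> S\<close>] \<open>dist p s < d\<close> \<open>L \<ge> 0\<close>
        by (metis dist_commute less_imp_le mult_left_mono order_trans)
      moreover have "dist (g p) (g s) \<le> L * d"
        using lipschitz_onD[OF lip_g \<open>p \<in> S\<close> \<open>s \<in> S\<close>] \<open>dist p s < d\<close> \<open>L \<ge> 0\<close>
        by (metis less_imp_le mult_left_mono order_trans)
      moreover have "dist (f n p) (g p) < e / 3"
        using elim(1) \<open>p \<in> G\<close> by blast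
      ultimately have "dist (f n s) (g s) < L * d + e / 3 + L * d"
        using dist_triangle[where x = "f n s" and y = "f n p" and z = "g s"]
          dist_triangle[where x = "f n p" and y = "g p" and z = "g s"] by linarith
      also have "\<dots> < e" using Ld by linarith
      finally show "dist (f n s) (g s) < e" .
    qed
  qed
qed

lemma tendsto_dist_uniform_limit:
  assumes "uniform_limit S f g F" "\<forall>\<^sub>F n in F. x n \<in> S"
  shows "((\<lambda>n. dist (f n (x n)) (g (x n))) \<longlongrightarrow> 0) F"
proof (rule tendstoI)
  fix e :: real assume "e > 0"
  with assms(1) have "\<forall>\<^sub>F n in F. \<forall>s\<in>S. dist (f n s) (g s) < e"
    by (simp add: uniform_limit_iff)
  with assms(2) show "\<forall>\<^sub>F n in F. dist (dist (f n (x n)) (g (x n))) 0 < e"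
    by eventually_elim auto
qed

lemma sum_atLeastAtMost_split_head:
  fixes f :: "nat \<Rightarrow> 'a::comm_monoid_add"
  assumes "1 \<le> j"
  shows "(\<Sum>i=1..m. f i) = (\<Sum>i\<in>{1..<j}. if i \<le> m then f i else 0) + (\<Sum>i=j..m. f i)"
proof -
  have "{1..m} = ({1..<j} \<inter> {1..m}) \<union> {j..m}" "({1..<j} \<inter> {1..m}) \<inter> {j..m} = {}"
    using assms by auto
  then have "(\<Sum>i=1..m. f i) = (\<Sum>i\<in>{1..<j} \<inter> {1..m}. f i) + (\<Sum>i=j..m. f i)"
    by (metis finite_Int finite_atLeastAtMost sum.union_disjoint)
  then show ?thesis
    by (simp add: sum.inter_restrict)
qed

lemma sum_tail_le_SUP:
  fixes w :: "nat \<Rightarrow> nat \<Rightarrow> real"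
  assumes w_nonneg: "\<And>n i. i \<in> {1..k n} \<Longrightarrow> 0 \<le> w n i"
    and w_sum: "\<And>n. (\<Sum>i=1..k n. w n i) \<le> B"
    and "1 \<le> j"
  shows "(\<Sum>i=j..k n. w n i) \<le> (SUP n. \<Sum>i=j..k n. w n i)"
proof (rule cSUP_upper[OF UNIV_I bdd_aboveI2])
  fix n
  have "(\<Sum>i=j..k n. w n i) \<le> (\<Sum>i=1..k n. w n i)"
    using \<open>1 \<le> j\<close> w_nonneg by (intro sum_mono2) auto
  then show "(\<Sum>i=j..k n. w n i) \<le> B" using w_sum[of n] by linarith
qed

lemma tendsto_sum_triangular_array:
  fixes h w :: "nat \<Rightarrow> nat \<Rightarrow> real"
  assumes h_nonneg: "\<And>n i. i \<in> {1..k n} \<Longrightarrow> 0 \<le> h n i"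
    and h_le: "\<And>n i. i \<in> {1..k n} \<Longrightarrow> h n i \<le> C * w n i"
    and w_nonneg: "\<And>n i. i \<in> {1..k n} \<Longrightarrow> 0 \<le> w n i"
    and w_sum: "\<And>n. (\<Sum>i=1..k n. w n i) \<le> B"
    and h_lim: "\<And>i. i \<ge> 1 \<Longrightarrow> ((\<lambda>n. h n i) \<longlongrightarrow> 0) (sequentially \<sqinter> principal {n. i \<le> k n})"
    and w_tail: "((\<lambda>j. SUP n. \<Sum>i=j..k n. w n i) \<longlongrightarrow> 0) sequentially"
  shows "((\<lambda>n. \<Sum>i=1..k n. h n i) \<longlongrightarrow> 0) sequentially"
proof (rule tendstoI)
  fix e :: real assume "e > 0"
  define \<tau> where "\<tau> j = (SUP n. \<Sum>i=j..k n. w n i)" for j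
  have "((\<lambda>j. \<bar>C\<bar> * \<tau> j) \<longlongrightarrow> 0) sequentially"
    using tendsto_mult_right_zero[OF w_tail] by (simp add: \<tau>_def)
  then have "\<forall>\<^sub>F j in sequentially. 1 \<le> j \<and> \<bar>C\<bar> * \<tau> j < e / 2"
    using \<open>e > 0\<close> by (intro eventually_conj eventually_ge_at_top order_tendstoD(2)) auto
  then obtain j where "1 \<le> j" and tail_small: "\<bar>C\<bar> * \<tau> j < e / 2"
    by (auto simp: eventually_sequentially)
  have tail: "(\<Sum>i=j..k n. h n i) \<le> \<bar>C\<bar> * \<tau> j" for n
  proof -
    have "(\<Sum>i=j..k n. h n i) \<le> (\<Sum>i=j..k n. \<bar>C\<bar> * w n i)"
    proof (rule sum_mono)
      fix i assume "i \<in> {j..k n}"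
      with \<open>1 \<le> j\<close> have "i \<in> {1..k n}" by auto
      then show "h n i \<le> \<bar>C\<bar> * w n i"
        using h_le mult_right_mono[OF abs_ge_self[of C] w_nonneg] by (meson order_trans)
    qed
    also have "\<dots> \<le> \<bar>C\<bar> * \<tau> j"
      unfolding \<tau>_def sum_distrib_left[symmetric]
      using sum_tail_le_SUP[OF w_nonneg w_sum \<open>1 \<le> j\<close>] abs_ge_zero by (rule mult_left_mono)
    finally show ?thesis .
  qed
  define head where "head n = (\<Sum>i\<in>{1..<j}. if i \<le> k n then h n i else 0)" for n
  have "(head \<longlongrightarrow> 0) sequentially"
    unfolding head_def by (intro tendsto_null_sum filterlim_If h_lim tendsto_const) auto
  then have "\<forall>\<^sub>F n in sequentially. head n < e / 2"
    by (rule order_tendstoD) (use \<open>e > 0\<close> in simp)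
  then show "\<forall>\<^sub>F n in sequentially. dist (\<Sum>i=1..k n. h n i) 0 < e"
  proof eventually_elim
    case (elim n)
    have "(\<Sum>i=1..k n. h n i) = head n + (\<Sum>i=j..k n. h n i)"
      unfolding head_def using \<open>1 \<le> j\<close> by (rule sum_atLeastAtMost_split_head)
    moreover have "0 \<le> (\<Sum>i=1..k n. h n i)"
      using h_nonneg by (rule sum_nonneg)
    ultimately show ?case
      using elim tail[of n] tail_small by simp
  qed
qed

lemma weak_conv_m_within_imp_char_tendsto:
  assumes "\<And>n. n \<in> S \<Longrightarrow> real_distribution (\<mu> n)" "real_distribution N"
    and "weak_conv_m_within \<mu> N S"
  shows "((\<lambda>n. char (\<mu> n) t) \<longlongrightarrow> char N t) (sequentially \<sqinter> principal S)"
proof (cases "finite S")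
  case True
  then show ?thesis by (simp add: sequentially_inf_principal_finite)
next
  case False
  note enum = sequentially_inf_principal_infinite[OF False]
  have "weak_conv_m (\<lambda>m. \<mu> (enumerate S m)) N"
    using assms(3)
    unfolding weak_conv_m_def weak_conv_def weak_conv_m_within_def enum filterlim_filtermap
    by blast
  then have "(\<lambda>m. char (\<mu> (enumerate S m)) t) \<longlonglongrightarrow> char N t"
    by (intro levy_continuity1 assms enumerate_in_set False)
  then show ?thesis by (simp add: enum filterlim_filtermap)
qed

definition centred_unit_variance :: "real measure \<Rightarrow> bool" where
  "centred_unit_variance \<mu> \<longleftrightarrow> real_distribution \<mu> \<and>
     integrable \<mu> (\<lambda>x. x) \<and> integrable \<mu> (\<lambda>x. x\<^sup>2) \<and>
     (\<integral>x. x \<partial>\<mu>) = 0 \<and> (\<integral>x. x\<^sup>2 \<partial>\<mu>) = 1"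

lemma centred_unit_variance_std_normal: "centred_unit_variance std_normal_distribution"
  using real_dist_normal_dist integrable_std_normal_distribution_moment[of 1]
    integrable_std_normal_distribution_moment[of 2]
    integral_std_normal_distribution_moment_odd[of 1] std_normal_distribution_even_moments(1)[of 1]
  by (simp add: centred_unit_variance_def)

lemma (in prob_space) centred_unit_variance_distr:
  assumes "integrable M X" "integrable M (\<lambda>x. (X x)\<^sup>2)" "expectation X = 0" "variance X = 1"
  shows "centred_unit_variance (distr M borel X)"
proof -
  have [measurable]: "X \<in> borel_measurable M"
    using assms(1) by (rule borel_measurable_integrable)
  show ?thesis
    using assms by (simp add: centred_unit_variance_def integrable_distr_eq integral_distr)
qed

lemma (in real_distribution) lipschitz_char:
  assumes "integrable M (\<lambda>x. x)"
  shows "(\<integral>x. \<bar>x\<bar> \<partial>M)-lipschitz_on UNIV (char M)"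
proof (rule lipschitz_onI)
  have iexp: "integrable M (\<lambda>x. iexp (r * x))" for r
    by (intro integrable_const_bound[where B=1]) auto
  fix s s' :: real
  have "char M s - char M s' = (CLINT x|M. iexp (s * x) - iexp (s' * x))"
    unfolding char_def by (rule Bochner_Integration.integral_diff[symmetric]) (rule iexp)+
  also have "cmod \<dots> \<le> (\<integral>x. cmod (iexp (s * x) - iexp (s' * x)) \<partial>M)"
    by (rule integral_norm_bound)
  also have "\<dots> \<le> (\<integral>x. \<bar>s - s'\<bar> * \<bar>x\<bar> \<partial>M)"
  proof (rule integral_mono)
    show "integrable M (\<lambda>x. cmod (iexp (s * x) - iexp (s' * x)))"
      by (intro integrable_norm Bochner_Integration.integrable_diff iexp)
    show "integrable M (\<lambda>x. \<bar>s - s'\<bar> * \<bar>x\<bar>)"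
      using assms by (intro integrable_mult_right integrable_abs)
    fix x
    have "iexp (s * x) - iexp (s' * x) = iexp (s' * x) * (iexp ((s - s') * x) - 1)"
      by (simp add: algebra_simps flip: exp_add)
    then have "cmod (iexp (s * x) - iexp (s' * x)) = cmod (iexp ((s - s') * x) - 1)"
      by (simp add: norm_mult)
    also have "\<dots> \<le> \<bar>s - s'\<bar> * \<bar>x\<bar>"
      using iexp_approx1[of "(s - s') * x" 0] by (simp add: abs_mult)
    finally show "cmod (iexp (s * x) - iexp (s' * x)) \<le> \<bar>s - s'\<bar> * \<bar>x\<bar>" .
  qed
  also have "\<dots> = (\<integral>x. \<bar>x\<bar> \<partial>M) * dist s s'"
    by (simp add: dist_real_def)
  finally show "dist (char M s) (char M s') \<le> (\<integral>x. \<bar>x\<bar> \<partial>M) * dist s s'"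
    by (simp add: dist_norm)
  show "0 \<le> (\<integral>x. \<bar>x\<bar> \<partial>M)" by simp
qed

lemma lipschitz_char_centred_unit_variance:
  assumes "centred_unit_variance \<mu>"
  shows "1-lipschitz_on UNIV (char \<mu>)"
proof -
  interpret real_distribution \<mu>
    using assms by (simp add: centred_unit_variance_def)
  have int: "integrable \<mu> (\<lambda>x. x)" "integrable \<mu> (\<lambda>x. x\<^sup>2)" and var: "(\<integral>x. x\<^sup>2 \<partial>\<mu>) = 1"
    using assms by (simp_all add: centred_unit_variance_def)
  have "(\<integral>x. \<bar>x\<bar> \<partial>\<mu>) \<le> (\<integral>x. (1 + x\<^sup>2) / 2 \<partial>\<mu>)"
  proof (rule integral_mono)
    fix x :: real
    have "0 \<le> (\<bar>x\<bar> - 1)\<^sup>2" by simp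
    then show "\<bar>x\<bar> \<le> (1 + x\<^sup>2) / 2"
      by (simp add: power2_eq_square algebra_simps abs_mult_self_eq)
  qed (use int in auto)
  also have "\<dots> = 1"
    using int var prob_space by (simp add: Bochner_Integration.integral_add)
  finally show ?thesis
    using lipschitz_char[OF int(1)] by (rule lipschitz_on_mono[rotated 2]) simp
qed

lemma char_centred_unit_variance_approx:
  assumes "centred_unit_variance \<mu>"
  shows "cmod (char \<mu> s - (1 - s\<^sup>2 / 2)) \<le> s\<^sup>2"
proof -
  interpret real_distribution \<mu>
    using assms by (simp add: centred_unit_variance_def)
  have moments: "integrable \<mu> (\<lambda>x. x ^ m)" if "m \<le> 2" for m
    using assms that by (auto simp: centred_unit_variance_def le_Suc_eq numeral_2_eq_2)
  have "(\<Sum>m\<le>2. ((\<i> * s) ^ m / fact m) * expectation (\<lambda>x. x ^ m)) = 1 - s\<^sup>2 / 2"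
    using assms prob_space
    by (simp add: centred_unit_variance_def numeral_2_eq_2 atMost_Suc power2_eq_square
        algebra_simps)
  moreover have "expectation (\<lambda>x. \<bar>x\<bar>\<^sup>2) = 1"
    using assms by (simp add: centred_unit_variance_def)
  ultimately show ?thesis
    using char_approx1[of 2 s, OF moments] by (simp add: numeral_2_eq_2)
qed

lemma char_centred_unit_variance_near_std_normal:
  assumes "centred_unit_variance \<mu>"
  shows "cmod (char \<mu> s - char std_normal_distribution s) \<le> 2 * s\<^sup>2"
proof -
  have "char \<mu> s - char std_normal_distribution s =
      (char \<mu> s - (1 - s\<^sup>2 / 2)) - (char std_normal_distribution s - (1 - s\<^sup>2 / 2))"
    by simp
  then have "cmod (char \<mu> s - char std_normal_distribution s) \<le>
      cmod (char \<mu> s - (1 - s\<^sup>2 / 2)) + cmod (char std_normal_distribution s - (1 - s\<^sup>2 / 2))"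
    by (metis norm_triangle_ineq4)
  then show ?thesis
    using char_centred_unit_variance_approx[OF assms, of s]
      char_centred_unit_variance_approx[OF centred_unit_variance_std_normal, of s]
    by linarith
qed

lemma uniform_limit_char_centred_unit_variance:
  assumes "\<And>n. n \<in> S \<Longrightarrow> centred_unit_variance (\<mu> n)"
    and "weak_conv_m_within \<mu> std_normal_distribution S"
  shows "uniform_limit (cball 0 T) (\<lambda>n. char (\<mu> n)) (char std_normal_distribution)
    (sequentially \<sqinter> principal S)"
proof (rule uniform_limit_equi_lipschitz)
  show "((\<lambda>n. char (\<mu> n) s) \<longlongrightarrow> char std_normal_distribution s) (sequentially \<sqinter> principal S)"
    for s
    using assms real_dist_normal_dist
    by (intro weak_conv_m_within_imp_char_tendsto) (auto simp: centred_unit_variance_def)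
  show "\<forall>\<^sub>F n in sequentially \<sqinter> principal S. 1-lipschitz_on (cball 0 T) (char (\<mu> n))"
    unfolding eventually_inf_principal
    using assms(1)
    by (auto intro!: always_eventually lipschitz_on_subset[OF lipschitz_char_centred_unit_variance])
  show "1-lipschitz_on (cball 0 T) (char std_normal_distribution)"
    using lipschitz_char_centred_unit_variance[OF centred_unit_variance_std_normal]
      lipschitz_on_subset by blast
qed simp

lemma tendsto_dist_char_std_normal:
  assumes "\<And>n. n \<in> S \<Longrightarrow> centred_unit_variance (\<mu> n)"
    and "weak_conv_m_within \<mu> std_normal_distribution S"
    and "\<And>n. n \<in> S \<Longrightarrow> \<bar>c n\<bar> \<le> 1"
  shows "((\<lambda>n. dist (char (\<mu> n) (c n * t)) (char std_normal_distribution (c n * t))) \<longlongrightarrow> 0)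
    (sequentially \<sqinter> principal S)"
proof (rule tendsto_dist_uniform_limit[where x = "\<lambda>n. c n * t" and S = "cball 0 \<bar>t\<bar>"])
  show "uniform_limit (cball 0 \<bar>t\<bar>) (\<lambda>n. char (\<mu> n)) (char std_normal_distribution)
      (sequentially \<sqinter> principal S)"
    using assms(1,2) by (rule uniform_limit_char_centred_unit_variance)
  show "\<forall>\<^sub>F n in sequentially \<sqinter> principal S. c n * t \<in> cball 0 \<bar>t\<bar>"
    unfolding eventually_inf_principal using assms(3)
    by (auto intro!: always_eventually simp: abs_mult intro: mult_left_le_one_le)
qed

lemma char_std_normal_prod:
  assumes "(\<Sum>i\<in>I. (a i)\<^sup>2) = 1"
  shows "char std_normal_distribution t = (\<Prod>i\<in>I. char std_normal_distribution (a i * t))"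
proof -
  have "(\<Sum>i\<in>I. - ((a i * t)\<^sup>2) / 2) = - (t\<^sup>2) / 2 * (\<Sum>i\<in>I. (a i)\<^sup>2)"
    by (simp add: sum_distrib_left power_mult_distrib sum_divide_distrib algebra_simps
        flip: sum_negf)
  moreover have "finite I"
    using assms by (metis sum.infinite zero_neq_one)
  ultimately show ?thesis
    using assms by (simp add: char_std_normal_distribution flip: exp_sum of_real_prod)
qed

lemma (in prob_space) char_distr_weighted_sum:
  assumes "indep_vars (\<lambda>i. borel) X I"
  shows "char (distr M borel (\<lambda>\<omega>. \<Sum>i\<in>I. a i * X i \<omega>)) t =
    (\<Prod>i\<in>I. char (distr M borel (X i)) (a i * t))"
proof -
  have "indep_vars (\<lambda>i. borel) (\<lambda>i \<omega>. a i * X i \<omega>) I"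
    by (rule indep_vars_compose2[OF assms]) auto
  then have "char (distr M borel (\<lambda>\<omega>. \<Sum>i\<in>I. a i * X i \<omega>)) t =
      (\<Prod>i\<in>I. char (distr M borel (\<lambda>\<omega>. a i * X i \<omega>)) t)"
    by (rule char_distr_sum)
  also have "\<dots> = (\<Prod>i\<in>I. char (distr M borel (X i)) (a i * t))"
  proof (rule prod.cong[OF refl])
    fix i assume "i \<in> I"
    then have [measurable]: "X i \<in> borel_measurable M"
      using assms by (simp add: indep_vars_def)
    show "char (distr M borel (\<lambda>\<omega>. a i * X i \<omega>)) t = char (distr M borel (X i)) (a i * t)"
      unfolding char_def by (simp add: integral_distr ac_simps)
  qed
  finally show ?thesis .
qed

lemma (in prob_space) char_weighted_sum_dist_std_normal_le:
  assumes "indep_vars (\<lambda>i. borel) X I" and "(\<Sum>i\<in>I. (a i)\<^sup>2) = 1"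
  shows "cmod (char (distr M borel (\<lambda>\<omega>. \<Sum>i\<in>I. a i * X i \<omega>)) t - char std_normal_distribution t)
    \<le> (\<Sum>i\<in>I. cmod (char (distr M borel (X i)) (a i * t) - char std_normal_distribution (a i * t)))"
  unfolding char_distr_weighted_sum[OF assms(1)] char_std_normal_prod[OF assms(2), of t]
proof (rule norm_prod_diff)
  fix i assume "i \<in> I"
  then have "random_variable borel (X i)"
    using assms(1) by (simp add: indep_vars_def)
  then show "cmod (char (distr M borel (X i)) (a i * t)) \<le> 1"
    by (intro real_distribution.cmod_char_le_1 real_distribution_distr)
next
  fix i show "cmod (char std_normal_distribution (a i * t)) \<le> 1"
    by (rule real_distribution.cmod_char_le_1[OF real_dist_normal_dist])
qed

theorem lemma4p4:
  fixes M :: "nat \<Rightarrow> 'a measure"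
    and k :: "nat \<Rightarrow> nat"
    and X :: "nat \<Rightarrow> nat \<Rightarrow> 'a \<Rightarrow> real"
    and a :: "nat \<Rightarrow> nat \<Rightarrow> real"
  assumes prob: "\<And>n. prob_space (M n)"
    and indep: "\<And>n. prob_space.indep_vars (M n) (\<lambda>i. borel) (X n) {1..k n}"
    and integrable: "\<And>n i. i \<in> {1..k n} \<Longrightarrow> integrable (M n) (X n i)"
    and sq_integrable: "\<And>n i. i \<in> {1..k n} \<Longrightarrow> integrable (M n) (\<lambda>x. (X n i x)\<^sup>2)"
    and centred: "\<And>n i. i \<in> {1..k n} \<Longrightarrow> prob_space.expectation (M n) (X n i) = 0"
    and variance: "\<And>n i. i \<in> {1..k n} \<Longrightarrow> prob_space.variance (M n) (X n i) = 1"
    and a_nonneg: "\<And>n i. i \<in> {1..k n} \<Longrightarrow> a n i \<ge> 0"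
    and a_norm: "\<And>n. (\<Sum>i=1..k n. (a n i)\<^sup>2) = 1"
    and conv: "\<And>i. i \<ge> 1 \<Longrightarrow>
       weak_conv_m_within (\<lambda>n. distr (M n) borel (X n i)) std_normal_distribution {n. i \<le> k n}"
    and tail: "((\<lambda>j. SUP n. (\<Sum>i=j..k n. (a n i)\<^sup>2)) \<longlongrightarrow> 0) sequentially"
  shows "weak_conv_m (\<lambda>n. distr (M n) borel (\<lambda>x. \<Sum>i=1..k n. a n i * X n i x))
           std_normal_distribution"
proof (rule levy_continuity)
  interpret Mn: prob_space "M n" for n by (rule prob)
  have unit: "centred_unit_variance (distr (M n) borel (X n i))" if "i \<in> {1..k n}" for n i
    using that by (intro Mn.centred_unit_variance_distr integrable sq_integrable centred variance)
  have a_le_1: "\<bar>a n i\<bar> \<le> 1" if "i \<in> {1..k n}" for n i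
    using member_le_sum[of i "{1..k n}" "\<lambda>i. (a n i)\<^sup>2"] that a_norm[of n]
    by (simp add: abs_square_le_1)
  show "real_distribution (distr (M n) borel (\<lambda>x. \<Sum>i=1..k n. a n i * X n i x))" for n
    using integrable by (intro Mn.real_distribution_distr borel_measurable_sum) auto
  show "real_distribution std_normal_distribution"
    by (rule real_dist_normal_dist)
  fix t :: real
  define h where "h n i = dist (char (distr (M n) borel (X n i)) (a n i * t))
      (char std_normal_distribution (a n i * t))" for n i
  have h_lim: "((\<lambda>n. \<Sum>i=1..k n. h n i) \<longlongrightarrow> 0) sequentially"
  proof (rule tendsto_sum_triangular_array[where C = "2 * t\<^sup>2" and B = 1, OF _ _ _ _ _ tail])
    show "h n i \<le> 2 * t\<^sup>2 * (a n i)\<^sup>2" if "i \<in> {1..k n}" for n i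
      using char_centred_unit_variance_near_std_normal[OF unit[OF that], of "a n i * t"]
      by (simp add: h_def dist_norm power_mult_distrib mult_ac)
    show "((\<lambda>n. h n i) \<longlongrightarrow> 0) (sequentially \<sqinter> principal {n. i \<le> k n})" if "1 \<le> i" for i
      unfolding h_def using that unit a_le_1 by (intro tendsto_dist_char_std_normal conv) auto
  qed (use a_norm in \<open>auto simp: h_def\<close>)
  have bound: "cmod (char (distr (M n) borel (\<lambda>x. \<Sum>i=1..k n. a n i * X n i x)) t
      - char std_normal_distribution t) \<le> (\<Sum>i=1..k n. h n i)" for n
    unfolding h_def dist_norm
    by (rule Mn.char_weighted_sum_dist_std_normal_le[OF indep a_norm])
  have "((\<lambda>n. char (distr (M n) borel (\<lambda>x. \<Sum>i=1..k n. a n i * X n i x)) t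
      - char std_normal_distribution t) \<longlongrightarrow> 0) sequentially"
    by (rule Lim_null_comparison[OF always_eventually[OF allI[OF bound]] h_lim])
  then show "(\<lambda>n. char (distr (M n) borel (\<lambda>x. \<Sum>i=1..k n. a n i * X n i x)) t)
      \<longlonglongrightarrow> char std_normal_distribution t"
    by (rule LIM_zero_cancel)
qed

end
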